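(* If $G$ is a median graph that isometrically embeds into the hypercube $Q_n$, then $c(G) \leq \left\lceil \frac{n+1}{2} \right\rceil$.
   Context: $Q_n$ is the graph on $\{0,1\}^n$ with two strings adjacent iff they differ in exactly one position. A graph $G$ is a median graph if for every triple $u,v,w \in V(G)$ there is a unique vertex $m$ with $d(u,m)+d(m,v) = d(u,v)$, $d(u,m)+d(m,w)=d(u,w)$, $d(v,m)+d(m,w)=d(v,w)$. $G$ isometrically embeds into $Q_n$ if it is isomorphic to an induced subgraph $H$ of $Q_n$ with $d_H(x,y) = d_{Q_n}(x,y)$ for all $x,y \in V(H)$. Cops and Robbers: $k$ cops choose starting vertices, then the robber does; in each round all cops move (to a neighbor or stay), then the robber moves (to a neighbor or stays); cops win if some cop occupies the robber's vertex. The cop number $c(G)$ is the minimum $k$ for which the cops can guarantee capture. *)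

theory Defs
  imports Main "HOL-Library.Extended_Nat"
begin

definition graph :: "'a set \<Rightarrow> ('a \<Rightarrow> 'a \<Rightarrow> bool) \<Rightarrow> bool" where
  "graph V E \<longleftrightarrow> (\<forall>x y. E x y \<longrightarrow> x \<in> V \<and> y \<in> V) \<and> (\<forall>x y. E x y \<longrightarrow> E y x)
                   \<and> (\<forall>x. \<not> E x x)"

definition is_walk :: "('a \<Rightarrow> 'a \<Rightarrow> bool) \<Rightarrow> 'a \<Rightarrow> 'a \<Rightarrow> 'a list \<Rightarrow> bool" where
  "is_walk E u v xs \<longleftrightarrow> xs \<noteq> [] \<and> hd xs = u \<and> last xs = v
      \<and> (\<forall>i. Suc i < length xs \<longrightarrow> E (xs ! i) (xs ! Suc i))"

definition gdist :: "('a \<Rightarrow> 'a \<Rightarrow> bool) \<Rightarrow> 'a \<Rightarrow> 'a \<Rightarrow> enat" where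
  "gdist E u v = (INF xs \<in> {xs. is_walk E u v xs}. enat (length xs - 1))"

definition connected_graph :: "'a set \<Rightarrow> ('a \<Rightarrow> 'a \<Rightarrow> bool) \<Rightarrow> bool" where
  "connected_graph V E \<longleftrightarrow> (\<forall>u\<in>V. \<forall>v\<in>V. gdist E u v \<noteq> \<infinity>)"

definition median_graph :: "'a set \<Rightarrow> ('a \<Rightarrow> 'a \<Rightarrow> bool) \<Rightarrow> bool" where
  "median_graph V E \<longleftrightarrow> graph V E \<and> connected_graph V E \<and>
     (\<forall>u\<in>V. \<forall>v\<in>V. \<forall>w\<in>V. \<exists>!m. m \<in> V
        \<and> gdist E u m + gdist E m v = gdist E u v
        \<and> gdist E u m + gdist E m w = gdist E u w
        \<and> gdist E v m + gdist E m w = gdist E v w)"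

definition Q_vert :: "nat \<Rightarrow> bool list set" where
  "Q_vert n = {xs. length xs = n}"

definition Q_adj :: "nat \<Rightarrow> bool list \<Rightarrow> bool list \<Rightarrow> bool" where
  "Q_adj n xs ys \<longleftrightarrow> length xs = n \<and> length ys = n
      \<and> card {i. i < n \<and> xs ! i \<noteq> ys ! i} = 1"

text \<open>G isometrically embeds into Q_n: G is isomorphic (via f) to the induced subgraph
H of Q_n on f ` V, and distances in H agree with distances in Q_n.  Since H is the
isomorphic image of G, d_H(f x, f y) = d_G(x, y).\<close>

definition isometric_embeds_in_Q :: "'a set \<Rightarrow> ('a \<Rightarrow> 'a \<Rightarrow> bool) \<Rightarrow> nat \<Rightarrow> bool" where
  "isometric_embeds_in_Q V E n \<longleftrightarrow> (\<exists>f. inj_on f V \<and> f ` V \<subseteq> Q_vert n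
      \<and> (\<forall>x\<in>V. \<forall>y\<in>V. E x y \<longleftrightarrow> Q_adj n (f x) (f y))
      \<and> (\<forall>x\<in>V. \<forall>y\<in>V. gdist E x y = gdist (Q_adj n) (f x) (f y)))"

definition cop_step :: "('a \<Rightarrow> 'a \<Rightarrow> bool) \<Rightarrow> 'a list \<Rightarrow> 'a list \<Rightarrow> bool" where
  "cop_step E C C' \<longleftrightarrow> list_all2 (\<lambda>a b. b = a \<or> E a b) C C'"

text \<open>cops_win_from V E C r: it is the cops' turn, cops at C, robber at r (not captured);
the cops can force capture in finitely many rounds (attractor of the reachability game).\<close>

inductive cops_win_from :: "'a set \<Rightarrow> ('a \<Rightarrow> 'a \<Rightarrow> bool) \<Rightarrow> 'a list \<Rightarrow> 'a \<Rightarrow> bool"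
  for V E where
  "cop_step E C C' \<Longrightarrow>
   (r \<in> set C' \<or> (\<forall>r'. (r' = r \<or> E r r') \<longrightarrow> r' \<in> set C' \<or> cops_win_from V E C' r'))
   \<Longrightarrow> cops_win_from V E C r"

definition cops_win :: "'a set \<Rightarrow> ('a \<Rightarrow> 'a \<Rightarrow> bool) \<Rightarrow> nat \<Rightarrow> bool" where
  "cops_win V E k \<longleftrightarrow> (\<exists>C. length C = k \<and> set C \<subseteq> V \<and>
      (\<forall>r\<in>V. r \<in> set C \<or> cops_win_from V E C r))"

definition cop_number :: "'a set \<Rightarrow> ('a \<Rightarrow> 'a \<Rightarrow> bool) \<Rightarrow> nat" where
  "cop_number V E = (LEAST k. cops_win V E k)"

end

theory Submission
  imports Defs
begin

text \<open>The image H of a median graph isometrically embedded in Q_n is closed under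
  coordinatewise majority, and any two of its points are joined by a geodesic inside H. Such a
  set is a retract of Q_n: split H along the first coordinate; by induction on n the
  two halves of H and their union, projected to the remaining coordinates, are retracts of the
  smaller cube, and these retractions glue together, the intersection of the two halves
  mediating between them.
  Composing a winning cop strategy on Q_n with a retraction gives one on any retract, and
  n div 2 + 1 = \<lceil>(n + 1) / 2\<rceil> cops win on Q_n: cop i keeps correcting the
  coordinates outside the pair {2i, 2i+1} in which it differs from the robber, and a potential
  built from these coordinates decreases in every round without capture.\<close>

section \<open>Hamming distance\<close>

definition diff_coords :: "bool list \<Rightarrow> bool list \<Rightarrow> nat set" where
  "diff_coords x y = {j. j < length x \<and> x ! j \<noteq> y ! j}"

definition hamming :: "bool list \<Rightarrow> bool list \<Rightarrow> nat" where
  "hamming x y = card (diff_coords x y)"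

definition flip :: "bool list \<Rightarrow> nat \<Rightarrow> bool list" where
  "flip x j = x[j := \<not> x ! j]"

definition near :: "bool list \<Rightarrow> bool list \<Rightarrow> bool" where
  "near x y \<longleftrightarrow> x = y \<or> hamming x y = 1"

fun majority :: "bool list \<Rightarrow> bool list \<Rightarrow> bool list \<Rightarrow> bool list" where
  "majority (a # x) (b # y) (c # z) = (a \<and> b \<or> b \<and> c \<or> a \<and> c) # majority x y z"
| "majority _ _ _ = []"

lemma finite_diff_coords [simp]: "finite (diff_coords x y)"
  unfolding diff_coords_def by auto

lemma diff_coords_subset: "diff_coords x y \<subseteq> {..<length x}"
  unfolding diff_coords_def by auto

lemma diff_coords_commute: "length x = length y \<Longrightarrow> diff_coords x y = diff_coords y x"
  unfolding diff_coords_def by auto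

lemma diff_coords_Cons:
  "diff_coords (a # x) (b # y) = (if a \<noteq> b then {0} else {}) \<union> Suc ` diff_coords x y"
proof (rule set_eqI)
  fix j
  show "j \<in> diff_coords (a # x) (b # y) \<longleftrightarrow> j \<in> (if a \<noteq> b then {0} else {}) \<union> Suc ` diff_coords x y"
    unfolding diff_coords_def by (cases j) auto
qed

lemma diff_coords_flip:
  "j < length x \<Longrightarrow> diff_coords (flip x j) y = diff_coords x y - {j} \<union> ({j} - diff_coords x y)"
  unfolding diff_coords_def flip_def by (auto simp: nth_list_update)

lemma diff_coords_flip_right:
  "j < length y \<Longrightarrow> length x = length y \<Longrightarrow>
    diff_coords x (flip y j) = diff_coords x y - {j} \<union> ({j} - diff_coords x y)"
  unfolding diff_coords_def flip_def by (auto simp: nth_list_update)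

lemma diff_coords_flip_self: "j < length x \<Longrightarrow> diff_coords x (flip x j) = {j}"
  unfolding diff_coords_def flip_def by (auto simp: nth_list_update)

lemma hamming_commute: "length x = length y \<Longrightarrow> hamming x y = hamming y x"
  unfolding hamming_def by (simp add: diff_coords_commute)

lemma hamming_self [simp]: "hamming x x = 0"
  unfolding hamming_def diff_coords_def by simp

lemma hamming_eq_0_iff: "length x = length y \<Longrightarrow> hamming x y = 0 \<longleftrightarrow> x = y"
  unfolding hamming_def diff_coords_def by (auto simp: nth_equalityI)

lemma hamming_Cons: "hamming (a # x) (b # y) = (if a \<noteq> b then 1 else 0) + hamming x y"
  unfolding hamming_def diff_coords_Cons by (auto simp: card_image)

lemma hamming_triangle:
  assumes "length x = length z" "length z = length y"
  shows "hamming x y \<le> hamming x z + hamming z y"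
proof -
  have "diff_coords x y \<subseteq> diff_coords x z \<union> diff_coords z y"
    using assms unfolding diff_coords_def by auto
  then have "hamming x y \<le> card (diff_coords x z \<union> diff_coords z y)"
    unfolding hamming_def by (simp add: card_mono)
  also have "\<dots> \<le> hamming x z + hamming z y"
    unfolding hamming_def by (rule card_Un_le)
  finally show ?thesis .
qed

lemma length_flip [simp]: "length (flip x j) = length x"
  unfolding flip_def by simp

lemma flip_flip [simp]: "flip (flip x j) j = x"
  unfolding flip_def by (cases "j < length x") (auto simp: list_update_beyond)

lemma flip_commute: "flip (flip x i) j = flip (flip x j) i"
  unfolding flip_def by (cases "i = j") (auto simp: list_update_swap)

lemma flip_Cons_0 [simp]: "flip (a # x) 0 = (\<not> a) # x"
  unfolding flip_def by simp

lemma flip_Cons_Suc [simp]: "flip (a # x) (Suc j) = a # flip x j"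
  unfolding flip_def by simp

lemma nth_flip: "j < length x \<Longrightarrow> flip x j ! i = (if i = j then \<not> x ! j else x ! i)"
  unfolding flip_def by simp

lemma hamming_flip_self: "j < length x \<Longrightarrow> hamming x (flip x j) = 1"
  unfolding hamming_def by (simp add: diff_coords_flip_self)

lemma hamming_flip_diff: "j \<in> diff_coords x y \<Longrightarrow> hamming (flip x j) y = hamming x y - 1"
  unfolding hamming_def using diff_coords_subset[of x y]
  by (subst diff_coords_flip) auto

lemma hamming_flip_same:
  "j < length x \<Longrightarrow> j \<notin> diff_coords x y \<Longrightarrow> hamming (flip x j) y = hamming x y + 1"
  unfolding hamming_def by (simp add: diff_coords_flip insert_absorb)

lemma hamming_eq_1_iff_flip:
  assumes "length x = length y"
  shows "hamming x y = 1 \<longleftrightarrow> (\<exists>j<length x. y = flip x j)"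
proof
  assume "hamming x y = 1"
  then obtain j where j: "diff_coords x y = {j}"
    unfolding hamming_def by (auto simp: card_Suc_eq)
  then have j_len: "j < length x" unfolding diff_coords_def by auto
  have "y ! i = flip x j ! i" if "i < length x" for i
    using j that j_len unfolding diff_coords_def set_eq_iff
    by (cases "i = j") (auto simp: nth_flip)
  then have "y = flip x j"
    using assms by (intro nth_equalityI) auto
  with j_len show "\<exists>j<length x. y = flip x j" by blast
qed (auto simp: hamming_flip_self)

lemma near_refl [simp]: "near x x"
  unfolding near_def by simp

lemma near_commute: "length x = length y \<Longrightarrow> near x y \<Longrightarrow> near y x"
  unfolding near_def using hamming_commute by metis

lemma near_flip: "j < length x \<Longrightarrow> near x (flip x j)"
  unfolding near_def by (simp add: hamming_flip_self)

lemma near_Cons: "near p q \<Longrightarrow> near (b # p) (b # q)"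
  unfolding near_def by (auto simp: hamming_Cons)

lemma near_Cons_Not: "near (b # p) ((\<not> b) # p)"
  unfolding near_def by (auto simp: hamming_Cons)

lemma hamming_Cons_eq_1:
  "length x = length y \<Longrightarrow> hamming (a # x) (c # y) = 1 \<Longrightarrow>
    a \<noteq> c \<and> x = y \<or> a = c \<and> hamming x y = 1"
  using hamming_eq_0_iff by (auto simp: hamming_Cons split: if_splits)

lemma length_majority: "length (majority x y z) = min (length x) (min (length y) (length z))"
  by (induction x y z rule: majority.induct) auto

lemma nth_majority:
  "i < length x \<Longrightarrow> length y = length x \<Longrightarrow> length z = length x \<Longrightarrow>
    majority x y z ! i = (x ! i \<and> y ! i \<or> y ! i \<and> z ! i \<or> x ! i \<and> z ! i)"
proof (induction x y z arbitrary: i rule: majority.induct)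
  case (1 a x b y c z)
  then show ?case by (cases i) auto
qed auto

lemma hamming_between_agree:
  assumes len: "length x = length m" "length m = length y"
    and between: "hamming x m + hamming m y = hamming x y"
    and j: "j < length x" "x ! j = y ! j"
  shows "m ! j = x ! j"
proof (rule ccontr)
  assume "m ! j \<noteq> x ! j"
  then have j_in: "j \<in> diff_coords x m \<inter> diff_coords m y"
    using len j unfolding diff_coords_def by auto
  have "diff_coords x y \<subseteq> (diff_coords x m \<union> diff_coords m y) - {j}"
    using len j unfolding diff_coords_def by auto
  then have "hamming x y \<le> card ((diff_coords x m \<union> diff_coords m y) - {j})"
    unfolding hamming_def by (simp add: card_mono)
  also have "\<dots> = card (diff_coords x m \<union> diff_coords m y) - 1"
    using j_in by simp
  finally have "hamming x y \<le> card (diff_coords x m \<union> diff_coords m y) - 1" .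
  moreover have "hamming x m + hamming m y
      = card (diff_coords x m \<union> diff_coords m y) + card (diff_coords x m \<inter> diff_coords m y)"
    unfolding hamming_def using card_Un_Int[of "diff_coords x m" "diff_coords m y"] by simp
  moreover have "card (diff_coords x m \<inter> diff_coords m y) \<ge> 1"
    using j_in by (metis One_nat_def Suc_leI card_gt_0_iff empty_iff finite_Int finite_diff_coords)
  ultimately show False using between by linarith
qed

section \<open>Distances in the hypercube\<close>

lemma Q_adj_iff_hamming: "Q_adj n x y \<longleftrightarrow> length x = n \<and> length y = n \<and> hamming x y = 1"
  unfolding Q_adj_def hamming_def diff_coords_def by auto

lemma is_walk_singleton: "is_walk E u v [w] \<longleftrightarrow> u = w \<and> v = w"
  unfolding is_walk_def by auto

lemma successively_iff_nth:
  "successively P xs \<longleftrightarrow> (\<forall>i. Suc i < length xs \<longrightarrow> P (xs ! i) (xs ! Suc i))"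
proof (induction xs rule: induct_list012)
  case (3 x y zs)
  have "(\<forall>i. Suc i < length (x # y # zs) \<longrightarrow> P ((x # y # zs) ! i) ((x # y # zs) ! Suc i))
      \<longleftrightarrow> P x y \<and> (\<forall>i. Suc i < length (y # zs) \<longrightarrow> P ((y # zs) ! i) ((y # zs) ! Suc i))"
    (is "(\<forall>i. ?Q i) \<longleftrightarrow> _")
  proof -
    have "(\<forall>i. ?Q i) \<longleftrightarrow> ?Q 0 \<and> (\<forall>i. ?Q (Suc i))"
      by (metis not0_implies_Suc)
    then show ?thesis by simp
  qed
  then show ?case using 3(2) by simp
qed auto

lemma is_walk_Cons:
  "xs \<noteq> [] \<Longrightarrow> is_walk E u v (a # xs) \<longleftrightarrow> a = u \<and> E u (hd xs) \<and> is_walk E (hd xs) v xs"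
  unfolding is_walk_def successively_iff_nth[symmetric] by (auto simp: successively_Cons)

lemma gdist_le_walk: "is_walk E u v xs \<Longrightarrow> gdist E u v \<le> enat (length xs - 1)"
  unfolding gdist_def by (rule INF_lower) simp

lemma gdist_attained:
  assumes "gdist E u v \<noteq> \<infinity>"
  obtains xs where "is_walk E u v xs" "gdist E u v = enat (length xs - 1)"
proof -
  let ?A = "(\<lambda>xs. enat (length xs - 1)) ` {xs. is_walk E u v xs}"
  have "?A \<noteq> {}"
  proof
    assume "?A = {}"
    then have "gdist E u v = Inf {}" unfolding gdist_def by simp
    then show False using assms by (simp add: top_enat_def)
  qed
  then have "Inf ?A \<in> ?A"
    unfolding Inf_enat_def by (auto intro: LeastI)
  then show ?thesis
    using that unfolding gdist_def by auto
qed

lemma hamming_le_hypercube_walk: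
  "is_walk (Q_adj n) x y xs \<Longrightarrow> length x = n \<Longrightarrow> length y = n \<Longrightarrow> hamming x y \<le> length xs - 1"
proof (induction xs arbitrary: x)
  case Nil
  then show ?case unfolding is_walk_def by simp
next
  case (Cons a xs)
  show ?case
  proof (cases "xs = []")
    case True
    then show ?thesis using Cons.prems by (simp add: is_walk_singleton)
  next
    case False
    then have walk: "Q_adj n x (hd xs)" "is_walk (Q_adj n) (hd xs) y xs"
      using Cons.prems(1) is_walk_Cons by metis+
    then have "length (hd xs) = n" "hamming x (hd xs) = 1"
      unfolding Q_adj_iff_hamming by simp_all
    moreover have "hamming x y \<le> hamming x (hd xs) + hamming (hd xs) y"
      using Cons.prems \<open>length (hd xs) = n\<close> by (simp add: hamming_triangle)
    ultimately show ?thesis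
      using Cons.IH[OF walk(2)] Cons.prems False by (cases xs) auto
  qed
qed

lemma hypercube_walk_exists:
  "length x = n \<Longrightarrow> length y = n \<Longrightarrow>
    \<exists>xs. is_walk (Q_adj n) x y xs \<and> length xs = hamming x y + 1"
proof (induction "hamming x y" arbitrary: x)
  case 0
  then have "x = y" using hamming_eq_0_iff by metis
  then show ?case by (intro exI[of _ "[x]"]) (simp add: is_walk_singleton)
next
  case (Suc d)
  then obtain j where j: "j \<in> diff_coords x y"
    unfolding hamming_def by (metis card.empty ex_in_conv nat.distinct(1))
  then have "j < n" using Suc.prems diff_coords_subset by blast
  have "hamming (flip x j) y = d" using hamming_flip_diff[OF j] Suc.hyps(2) by simp
  then obtain xs where xs: "is_walk (Q_adj n) (flip x j) y xs" "length xs = d + 1"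
    using Suc.hyps(1) Suc.prems by fastforce
  have "Q_adj n x (flip x j)"
    using Suc.prems(1) \<open>j < n\<close> hamming_flip_self[of j x] unfolding Q_adj_iff_hamming by simp
  moreover have "xs \<noteq> []" "hd xs = flip x j"
    using xs unfolding is_walk_def by auto
  ultimately have "is_walk (Q_adj n) x y (x # xs)"
    using xs(1) by (simp add: is_walk_Cons)
  then show ?case using xs(2) Suc.hyps(2) by (intro exI[of _ "x # xs"]) simp
qed

lemma gdist_hypercube:
  assumes "length x = n" "length y = n"
  shows "gdist (Q_adj n) x y = enat (hamming x y)"
proof -
  obtain xs where "is_walk (Q_adj n) x y xs" "length xs = hamming x y + 1"
    using hypercube_walk_exists[OF assms] by blast
  then have upper: "gdist (Q_adj n) x y \<le> enat (hamming x y)"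
    using gdist_le_walk by fastforce
  then obtain ys where ys: "is_walk (Q_adj n) x y ys" "gdist (Q_adj n) x y = enat (length ys - 1)"
    using gdist_attained by (metis enat_ord_simps(5) infinity_ileE)
  then show ?thesis
    using upper hamming_le_hypercube_walk[OF ys(1) assms] by simp
qed

section \<open>Median sets of the hypercube\<close>

text \<open>The last clause says that any two points of H are joined by a geodesic of Q_n
  inside H.\<close>

definition median_set :: "nat \<Rightarrow> bool list set \<Rightarrow> bool" where
  "median_set n H \<longleftrightarrow> H \<subseteq> {x. length x = n} \<and> H \<noteq> {}
     \<and> (\<forall>x\<in>H. \<forall>y\<in>H. \<forall>z\<in>H. majority x y z \<in> H)
     \<and> (\<forall>u\<in>H. \<forall>v\<in>H. u \<noteq> v \<longrightarrow> (\<exists>j\<in>diff_coords u v. flip u j \<in> H))"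

locale median_hypercube_embedding =
  fixes V :: "'a set" and E :: "'a \<Rightarrow> 'a \<Rightarrow> bool" and n :: nat and f :: "'a \<Rightarrow> bool list"
  assumes median: "median_graph V E"
    and inj: "inj_on f V"
    and into: "f ` V \<subseteq> Q_vert n"
    and adj: "\<And>x y. x \<in> V \<Longrightarrow> y \<in> V \<Longrightarrow> E x y \<longleftrightarrow> Q_adj n (f x) (f y)"
    and isometric: "\<And>x y. x \<in> V \<Longrightarrow> y \<in> V \<Longrightarrow> gdist E x y = gdist (Q_adj n) (f x) (f y)"
begin

lemma graph: "graph V E"
  using median unfolding median_graph_def by simp

lemma length_image: "x \<in> V \<Longrightarrow> length (f x) = n"
  using into unfolding Q_vert_def by auto

lemma gdist_eq_hamming: "x \<in> V \<Longrightarrow> y \<in> V \<Longrightarrow> gdist E x y = enat (hamming (f x) (f y))"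
  using isometric gdist_hypercube length_image by simp

lemma majority_image_closed:
  assumes "u \<in> V" "v \<in> V" "w \<in> V"
  shows "majority (f u) (f v) (f w) \<in> f ` V"
proof -
  obtain m where m: "m \<in> V" "gdist E u m + gdist E m v = gdist E u v"
    "gdist E u m + gdist E m w = gdist E u w" "gdist E v m + gdist E m w = gdist E v w"
    using median assms unfolding median_graph_def by metis
  have between:
    "hamming (f u) (f m) + hamming (f m) (f v) = hamming (f u) (f v)"
    "hamming (f u) (f m) + hamming (f m) (f w) = hamming (f u) (f w)"
    "hamming (f v) (f m) + hamming (f m) (f w) = hamming (f v) (f w)"
    using m assms by (simp_all add: gdist_eq_hamming)
  txt \<open>Lying on a geodesic between any two of f u, f v, f w, the point f m agrees with
    them wherever they agree.\<close>
  have "f m = majority (f u) (f v) (f w)"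
  proof (rule nth_equalityI)
    show "length (f m) = length (majority (f u) (f v) (f w))"
      using assms m length_image by (simp add: length_majority)
    fix j assume "j < length (f m)"
    then have j: "j < length (f u)" using length_image m assms by simp
    note agree = hamming_between_agree[OF _ _ _ _, of _ _ _ j]
    show "f m ! j = majority (f u) (f v) (f w) ! j"
      using agree[OF _ _ between(1)] agree[OF _ _ between(2)] agree[OF _ _ between(3)]
        j length_image assms m by (auto simp: nth_majority)
  qed
  then show ?thesis using m(1) by (metis image_eqI)
qed

lemma geodesic_step_image:
  assumes uv: "u \<in> V" "v \<in> V" "u \<noteq> v"
  shows "\<exists>j\<in>diff_coords (f u) (f v). flip (f u) j \<in> f ` V"
proof -
  let ?d = "hamming (f u) (f v)"
  have "f u \<noteq> f v" using inj uv unfolding inj_on_def by auto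
  then have "?d \<noteq> 0" using hamming_eq_0_iff length_image uv by metis
  obtain xs where xs: "is_walk E u v xs" "gdist E u v = enat (length xs - 1)"
    using gdist_attained gdist_eq_hamming uv by (metis enat.distinct(2))
  then have len: "length xs = ?d + 1" using gdist_eq_hamming uv \<open>?d \<noteq> 0\<close> by simp
  then obtain w ws where xs_eq: "xs = u # w # ws"
    using xs(1) \<open>?d \<noteq> 0\<close> unfolding is_walk_def by (cases xs; cases "tl xs") auto
  then have walk: "E u w" "is_walk E w v (w # ws)"
    using xs(1) is_walk_Cons[of "w # ws" E u v u] by auto
  then have "w \<in> V" using graph unfolding graph_def by blast
  have "gdist E w v \<le> enat (length (w # ws) - 1)" using gdist_le_walk[OF walk(2)] .
  then have closer: "hamming (f w) (f v) < ?d"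
    using gdist_eq_hamming \<open>w \<in> V\<close> uv len xs_eq \<open>?d \<noteq> 0\<close> by simp
  have "Q_adj n (f u) (f w)" using adj uv \<open>w \<in> V\<close> walk(1) by simp
  then have "hamming (f u) (f w) = 1"
    unfolding Q_adj_iff_hamming by simp
  then obtain j where j: "j < n" "f w = flip (f u) j"
    using hamming_eq_1_iff_flip length_image uv \<open>w \<in> V\<close> by metis
  have "j \<in> diff_coords (f u) (f v)"
    using closer hamming_flip_same[of j "f u" "f v"] j length_image uv by fastforce
  then show ?thesis using j \<open>w \<in> V\<close> by force
qed

lemma median_set_image: "V \<noteq> {} \<Longrightarrow> median_set n (f ` V)"
  unfolding median_set_def
  using majority_image_closed geodesic_step_image length_image by blast

end

section \<open>Median sets are retracts of the hypercube\<close>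

definition hypercube_retraction :: "nat \<Rightarrow> bool list set \<Rightarrow> (bool list \<Rightarrow> bool list) \<Rightarrow> bool" where
  "hypercube_retraction n H \<rho> \<longleftrightarrow> (\<forall>x. length x = n \<longrightarrow> \<rho> x \<in> H) \<and> (\<forall>h\<in>H. \<rho> h = h)
     \<and> (\<forall>x y. length x = n \<longrightarrow> length y = n \<longrightarrow> hamming x y = 1 \<longrightarrow> near (\<rho> x) (\<rho> y))"

lemma hypercube_retraction_near:
  "hypercube_retraction n H \<rho> \<Longrightarrow> length x = n \<Longrightarrow> length y = n \<Longrightarrow> near x y \<Longrightarrow> near (\<rho> x) (\<rho> y)"
  unfolding hypercube_retraction_def near_def by auto

definition disagreements :: "nat set \<Rightarrow> bool list \<Rightarrow> bool list \<Rightarrow> nat set" where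
  "disagreements K v x = {j \<in> K. x ! j \<noteq> v ! j}"

definition step_towards :: "nat set \<Rightarrow> bool list \<Rightarrow> bool list \<Rightarrow> bool list" where
  "step_towards K v x =
    (if disagreements K v x = {} then x else flip x (Min (disagreements K v x)))"

lemma length_step_towards [simp]: "length (step_towards K v x) = length x"
  unfolding step_towards_def by simp

lemma finite_disagreements: "K \<subseteq> {..<n} \<Longrightarrow> finite (disagreements K v x)"
  unfolding disagreements_def by (rule finite_subset[of _ "{..<n}"]) auto

lemma disagreements_flip:
  "c < length x \<Longrightarrow> disagreements K v (flip x c) =
    (if c \<in> K then disagreements K v x - {c} \<union> ({c} - disagreements K v x) else disagreements K v x)"
  unfolding disagreements_def by (auto simp: nth_flip)

lemma step_towards_near_self:
  assumes "K \<subseteq> {..<length x}"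
  shows "near x (step_towards K v x)"
proof (cases "disagreements K v x = {}")
  case False
  then have "Min (disagreements K v x) \<in> disagreements K v x"
    using finite_disagreements[OF assms] by simp
  then have "Min (disagreements K v x) < length x"
    using assms unfolding disagreements_def by auto
  then show ?thesis using False unfolding step_towards_def by (simp add: near_flip)
qed (simp add: step_towards_def)

lemma step_towards_near_flip_agreeing:
  assumes K: "K \<subseteq> {..<length x}" and c: "c \<in> K" "c \<notin> disagreements K v x"
  shows "near (step_towards K v x) (step_towards K v (flip x c))"
proof -
  have "c < length x" using K c by auto
  then have D: "disagreements K v (flip x c) = insert c (disagreements K v x)"
    using disagreements_flip c by auto
  show ?thesis
  proof (cases "disagreements K v x = {}")
    case True
    then show ?thesis unfolding step_towards_def using D \<open>c < length x\<close> by (simp add: near_flip)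
  next
    case False
    let ?j = "Min (disagreements K v x)"
    have "?j \<in> disagreements K v x" using False finite_disagreements[OF K] by simp
    then have "?j < length x" using K unfolding disagreements_def by auto
    have step_x: "step_towards K v x = flip x ?j"
      unfolding step_towards_def using False by simp
    have "Min (disagreements K v (flip x c)) = min c ?j"
      unfolding D using False finite_disagreements[OF K] by (simp add: Min_insert)
    then have "step_towards K v (flip x c) = (if c < ?j then x else flip (flip x ?j) c)"
      unfolding step_towards_def using D by (auto simp: min_def flip_commute)
    moreover have "near (flip x ?j) x"
      using near_flip[OF \<open>?j < length x\<close>] near_commute by (metis length_flip)
    ultimately show ?thesis
      using step_x near_flip \<open>c < length x\<close> by auto
  qed
qed

lemma step_towards_nonexpansive:
  assumes K: "K \<subseteq> {..<length x}" and xy: "length y = length x" "hamming x y = 1"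
  shows "near (step_towards K v x) (step_towards K v y)"
proof -
  obtain c where c: "c < length x" "y = flip x c"
    using xy hamming_eq_1_iff_flip by metis
  consider "c \<notin> K" | "c \<in> K" "c \<notin> disagreements K v x" | "c \<in> K" "c \<notin> disagreements K v y"
    using disagreements_flip[OF c(1)] c(2) by auto
  then show ?thesis
  proof cases
    case 1
    then have D: "disagreements K v (flip x c) = disagreements K v x"
      using disagreements_flip c by simp
    have "step_towards K v y = flip (step_towards K v x) c"
      unfolding step_towards_def c(2) D by (simp add: flip_commute)
    then show ?thesis using near_flip c(1) by simp
  next
    case 2
    then show ?thesis using step_towards_near_flip_agreeing[OF K] c by simp
  next
    case 3
    then have "near (step_towards K v y) (step_towards K v x)"
      using step_towards_near_flip_agreeing[of K y c v] K xy c by simp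
    then show ?thesis using near_commute xy by (metis length_step_towards)
  qed
qed

locale median_set_split =
  fixes n :: nat and H :: "bool list set"
  assumes median_set: "median_set (Suc n) H"
begin

definition half :: "bool \<Rightarrow> bool list set" where
  "half b = {x. b # x \<in> H}"

definition projection :: "bool list set" where
  "projection = half False \<union> half True"

lemma length_mem: "h \<in> H \<Longrightarrow> length h = Suc n"
  using median_set unfolding median_set_def by auto

lemma majority_closed: "x \<in> H \<Longrightarrow> y \<in> H \<Longrightarrow> z \<in> H \<Longrightarrow> majority x y z \<in> H"
  using median_set unfolding median_set_def by auto

lemma geodesic_step: "u \<in> H \<Longrightarrow> v \<in> H \<Longrightarrow> u \<noteq> v \<Longrightarrow> \<exists>j\<in>diff_coords u v. flip u j \<in> H"
  using median_set unfolding median_set_def by auto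

lemma length_half: "x \<in> half b \<Longrightarrow> length x = n"
  using length_mem unfolding half_def by fastforce

lemma mem_Cons_tl: "h \<in> H \<Longrightarrow> h = hd h # tl h"
  using length_mem by (metis Zero_not_Suc list.collapse list.size(3))

lemma tl_mem_half: "h \<in> H \<Longrightarrow> tl h \<in> half (hd h)"
  using mem_Cons_tl unfolding half_def by fastforce

lemma mem_projection_iff: "p \<in> projection \<longleftrightarrow> (\<exists>b. p \<in> half b)"
  unfolding projection_def by (metis (full_types) Un_iff)

lemma mem_projection_cases: "p \<in> projection \<Longrightarrow> p \<in> half b \<or> p \<in> half (\<not> b)"
  unfolding projection_def by (cases b) auto

lemma length_projection: "p \<in> projection \<Longrightarrow> length p = n"
  using mem_projection_iff length_half by blast

lemma majority_closed_half:
  "x \<in> half b \<Longrightarrow> y \<in> half b \<Longrightarrow> z \<in> half b \<Longrightarrow> majority x y z \<in> half b"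
  using majority_closed[of "b # x" "b # y" "b # z"] unfolding half_def by simp

lemma geodesic_step_half:
  assumes "u \<in> half b" "v \<in> half b" "u \<noteq> v"
  shows "\<exists>j\<in>diff_coords u v. flip u j \<in> half b"
proof -
  obtain j where "j \<in> diff_coords (b # u) (b # v)" "flip (b # u) j \<in> H"
    using geodesic_step[of "b # u" "b # v"] assms unfolding half_def by auto
  then show ?thesis
    unfolding diff_coords_Cons half_def by auto
qed

lemma median_set_half: "half b \<noteq> {} \<Longrightarrow> median_set n (half b)"
  unfolding median_set_def
  using length_half majority_closed_half geodesic_step_half by blast

lemma majority_closed_projection:
  assumes "x \<in> projection" "y \<in> projection" "z \<in> projection"
  shows "majority x y z \<in> projection"
proof -
  obtain a b c where "a # x \<in> H" "b # y \<in> H" "c # z \<in> H"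
    using assms mem_projection_iff unfolding half_def by auto
  then have "(a \<and> b \<or> b \<and> c \<or> a \<and> c) # majority x y z \<in> H"
    using majority_closed by fastforce
  then show ?thesis using mem_projection_iff unfolding half_def by auto
qed

lemma geodesic_step_projection:
  assumes uv: "u \<in> projection" "v \<in> projection" "u \<noteq> v"
  shows "\<exists>j\<in>diff_coords u v. flip u j \<in> projection"
proof -
  obtain a c where ac: "u \<in> half a" "v \<in> half c" using uv mem_projection_iff by auto
  show ?thesis
  proof (cases "u \<in> half c")
    case True
    then show ?thesis using geodesic_step_half ac uv mem_projection_iff by blast
  next
    case False
    then have "a \<noteq> c" using ac by blast
    then obtain j where j: "j \<in> diff_coords (a # u) (c # v)" "flip (a # u) j \<in> H"
      using geodesic_step[of "a # u" "c # v"] ac unfolding half_def by auto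
    have "j \<noteq> 0"
      using j(2) False \<open>a \<noteq> c\<close> unfolding half_def by (cases a; cases c; cases j) auto
    then obtain j' where "j = Suc j'" "j' \<in> diff_coords u v" "flip u j' \<in> half a"
      using j unfolding diff_coords_Cons half_def by (auto split: if_splits)
    then show ?thesis using mem_projection_iff by blast
  qed
qed

lemma median_set_projection: "median_set n projection"
proof -
  obtain h where "h \<in> H" using median_set unfolding median_set_def by auto
  then have "projection \<noteq> {}" using tl_mem_half mem_projection_iff by blast
  then show ?thesis unfolding median_set_def
    using length_projection majority_closed_projection geodesic_step_projection by blast
qed

lemma halves_intersect: "u \<in> half False \<Longrightarrow> v \<in> half True \<Longrightarrow> \<exists>m. m \<in> half False \<and> m \<in> half True"
proof (induction "hamming u v" arbitrary: u rule: less_induct)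
  case less
  obtain j where j: "j \<in> diff_coords (False # u) (True # v)" "flip (False # u) j \<in> H"
    using geodesic_step[of "False # u" "True # v"] less.prems unfolding half_def by auto
  show ?case
  proof (cases j)
    case 0
    then show ?thesis using j less.prems unfolding half_def by auto
  next
    case (Suc j')
    then have j': "j' \<in> diff_coords u v" "flip u j' \<in> half False"
      using j unfolding diff_coords_Cons half_def by auto
    have "hamming u v > 0" using j'(1) unfolding hamming_def by (auto simp: card_gt_0_iff)
    then have "hamming (flip u j') v < hamming u v" using hamming_flip_diff[OF j'(1)] by simp
    then show ?thesis using less.hyps[OF _ j'(2) less.prems(2)] by blast
  qed
qed

lemma no_edge_between_exclusive_parts:
  assumes p: "p \<in> half b" "p \<notin> half (\<not> b)" and q: "q \<in> half (\<not> b)" "q \<notin> half b"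
  shows "hamming p q \<noteq> 1"
proof
  assume "hamming p q = 1"
  then obtain i where i: "i < length p" "q = flip p i"
    using hamming_eq_1_iff_flip length_half p(1) q(1) by metis
  obtain j where j: "j \<in> diff_coords (b # p) ((\<not> b) # q)" "flip (b # p) j \<in> H"
    using geodesic_step[of "b # p" "(\<not> b) # q"] p(1) q(1) unfolding half_def by auto
  show False
  proof (cases j)
    case 0
    then show False using j(2) p(2) unfolding half_def by simp
  next
    case (Suc j')
    then have "j' \<in> diff_coords p q" using j(1) unfolding diff_coords_Cons by auto
    then have "j' = i" using diff_coords_flip_self[OF i(1)] i(2) by simp
    then show False using j(2) Suc i q(2) unfolding half_def by simp
  qed
qed

lemma retraction_single_half:
  assumes empty: "half (\<not> b) = {}" and \<sigma>: "hypercube_retraction n (half b) \<sigma>"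
  shows "hypercube_retraction (Suc n) H (\<lambda>x. b # \<sigma> (tl x))"
  unfolding hypercube_retraction_def
proof (intro conjI allI impI ballI)
  fix x :: "bool list" assume "length x = Suc n"
  then show "b # \<sigma> (tl x) \<in> H" using \<sigma> unfolding hypercube_retraction_def half_def by simp
next
  fix h assume h: "h \<in> H"
  then have "tl h \<in> half (hd h)" by (rule tl_mem_half)
  moreover from this have "hd h = b" using empty by (cases "hd h"; cases b) auto
  ultimately have "\<sigma> (tl h) = tl h" using \<sigma> unfolding hypercube_retraction_def by auto
  then show "b # \<sigma> (tl h) = h" using mem_Cons_tl[OF h] \<open>hd h = b\<close> by simp
next
  fix x y :: "bool list" assume xy: "length x = Suc n" "length y = Suc n" "hamming x y = 1"
  then obtain a x' c y' where xy': "x = a # x'" "y = c # y'" "length x' = n" "length y' = n"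
    by (cases x; cases y) auto
  then have "a \<noteq> c \<and> x' = y' \<or> a = c \<and> hamming x' y' = 1"
    using hamming_Cons_eq_1 xy by simp
  then have "near x' y'" unfolding near_def by blast
  then have "near (\<sigma> x') (\<sigma> y')" using hypercube_retraction_near[OF \<sigma>] xy' by simp
  then show "near (b # \<sigma> (tl x)) (b # \<sigma> (tl y))" using xy' by (simp add: near_Cons)
qed

end

locale median_set_split_retractions = median_set_split +
  fixes c :: "bool list" and S :: "bool \<Rightarrow> bool list \<Rightarrow> bool list" and \<sigma> :: "bool list \<Rightarrow> bool list"
  assumes c_mem: "c \<in> half False" "c \<in> half True"
    and retraction_half: "\<And>b. hypercube_retraction n (half b) (S b)"
    and retraction_projection: "hypercube_retraction n projection \<sigma>"
begin

definition rigid :: "nat set" where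
  "rigid = {j. j < n \<and> (\<forall>m. m \<in> half False \<longrightarrow> m \<in> half True \<longrightarrow> m ! j = c ! j)}"

definition pull :: "bool list \<Rightarrow> bool list" where
  "pull = step_towards rigid c"

text \<open>A point p of the projection outside half b is sent into the other half, to
  S (\<not> b) (pull p); the pull step makes this compatible with edges leaving the intersection
  of the halves (lemma pull_leaving_edge).\<close>

definition lift :: "bool \<Rightarrow> bool list \<Rightarrow> bool list" where
  "lift b p = (if p \<in> half b then b # p else (\<not> b) # S (\<not> b) (pull p))"

definition retraction :: "bool list \<Rightarrow> bool list" where
  "retraction x = lift (hd x) (\<sigma> (tl x))"

lemma mem_both_halves_iff: "p \<in> half b \<and> p \<in> half (\<not> b) \<longleftrightarrow> p \<in> half False \<and> p \<in> half True"
  by (cases b) auto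

text \<open>A coordinate flipped by an edge leaving the intersection of the two halves is constant
  on that intersection: otherwise the majority of b # p, (\<not> b) # q and some b # m with m in
  the intersection would be b # q.\<close>

lemma leaving_edge_coord_rigid:
  assumes p: "p \<in> half b" "p \<in> half (\<not> b)" and q: "q \<in> half (\<not> b)" "q \<notin> half b"
    and j: "j < n" "q = flip p j"
  shows "j \<in> rigid"
proof (rule ccontr)
  assume "j \<notin> rigid"
  then obtain m where m: "m \<in> half False" "m \<in> half True" "m ! j \<noteq> c ! j"
    unfolding rigid_def using j(1) by auto
  define m' where "m' = (if p ! j = c ! j then m else c)"
  have m': "m' \<in> half b" "m' ! j \<noteq> p ! j"
    unfolding m'_def using m c_mem by (cases b; auto)+
  have len: "length p = n" "length m' = n" using p(1) m'(1) length_half by auto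
  have "majority p q m' = q"
    using j len m'(2) by (intro nth_equalityI) (auto simp: length_majority nth_majority nth_flip)
  moreover have "majority (b # p) ((\<not> b) # q) (b # m') \<in> H"
    using majority_closed p(1) q(1) m'(1) unfolding half_def by blast
  ultimately have "q \<in> half b" unfolding half_def by simp
  then show False using q(2) by simp
qed

lemma pull_leaving_edge:
  assumes p: "p \<in> half b" "p \<in> half (\<not> b)" and q: "q \<in> half (\<not> b)" "q \<notin> half b"
    and "hamming p q = 1"
  shows "pull q = p"
proof -
  obtain j where j: "j < length p" "q = flip p j"
    using assms hamming_eq_1_iff_flip length_half by metis
  have "j \<in> rigid"
    using leaving_edge_coord_rigid[OF p q] j length_half p(1) by simp
  moreover have "p ! i = c ! i" if "i \<in> rigid" for i
    using that p mem_both_halves_iff unfolding rigid_def by blast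
  ultimately have "disagreements rigid c q = {j}"
    using j unfolding disagreements_def by (auto simp: nth_flip)
  then show ?thesis unfolding pull_def step_towards_def using j by simp
qed

lemma rigid_subset: "rigid \<subseteq> {..<n}"
  unfolding rigid_def by auto

lemma length_pull [simp]: "length (pull p) = length p"
  unfolding pull_def by simp

lemma pull_near_self: "length p = n \<Longrightarrow> near p (pull p)"
  unfolding pull_def using step_towards_near_self rigid_subset by simp

lemma pull_nonexpansive: "length p = n \<Longrightarrow> length q = n \<Longrightarrow> hamming p q = 1 \<Longrightarrow> near (pull p) (pull q)"
  unfolding pull_def using step_towards_nonexpansive rigid_subset by simp

lemma lift_mem: "p \<in> projection \<Longrightarrow> lift b p \<in> H"
  using retraction_half length_projection
  unfolding lift_def hypercube_retraction_def half_def by auto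

lemma length_lift: "p \<in> projection \<Longrightarrow> length (lift b p) = Suc n"
  using lift_mem length_mem by blast

lemma lift_near_lift_Not_exclusive:
  assumes p: "p \<in> half b" "p \<notin> half (\<not> b)"
  shows "near (lift b p) (lift (\<not> b) p)"
proof -
  have len: "length p = n" using p(1) length_half by simp
  then have "near (S b p) (S b (pull p))"
    using hypercube_retraction_near[OF retraction_half] pull_near_self by simp
  then have "near p (S b (pull p))"
    using retraction_half p(1) unfolding hypercube_retraction_def by simp
  then show ?thesis
    using p unfolding lift_def by (simp add: near_Cons)
qed

lemma lift_near_lift_Not:
  assumes "p \<in> projection"
  shows "near (lift b p) (lift (\<not> b) p)"
proof -
  consider "p \<in> half b" "p \<in> half (\<not> b)" | "p \<in> half b" "p \<notin> half (\<not> b)"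
    | "p \<notin> half b" "p \<in> half (\<not> b)"
    using mem_projection_cases[OF assms, of b] by blast
  then show ?thesis
  proof cases
    case 1
    then show ?thesis unfolding lift_def by (simp add: near_Cons_Not)
  next
    case 2
    then show ?thesis by (rule lift_near_lift_Not_exclusive)
  next
    case 3
    then have "near (lift (\<not> b) p) (lift b p)"
      using lift_near_lift_Not_exclusive[of p "\<not> b"] by simp
    then show ?thesis using near_commute length_lift assms by metis
  qed
qed

lemma lift_near_leaving:
  assumes "p \<in> half b" "q \<in> projection" "q \<notin> half b" "hamming p q = 1"
  shows "near (lift b p) (lift b q)"
proof -
  have q: "q \<in> half (\<not> b)" using assms(2,3) mem_projection_cases by blast
  then have p: "p \<in> half (\<not> b)"
    using no_edge_between_exclusive_parts assms by blast
  have "lift b q = (\<not> b) # p"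
    using pull_leaving_edge[OF assms(1) p q assms(3,4)] assms(3) retraction_half p
    unfolding lift_def hypercube_retraction_def by simp
  then show ?thesis using assms(1) unfolding lift_def by (simp add: near_Cons_Not)
qed

lemma lift_nonexpansive:
  assumes pq: "p \<in> projection" "q \<in> projection" "hamming p q = 1"
  shows "near (lift b p) (lift b q)"
proof -
  have len: "length p = n" "length q = n" using pq length_projection by auto
  consider "p \<in> half b" "q \<in> half b" | "p \<notin> half b" "q \<notin> half b"
    | "p \<in> half b" "q \<notin> half b" | "p \<notin> half b" "q \<in> half b"
    by blast
  then show ?thesis
  proof cases
    case 1
    then show ?thesis using pq(3) unfolding lift_def near_def by (simp add: hamming_Cons)
  next
    case 2
    have "near (pull p) (pull q)" using pull_nonexpansive len pq(3) by simp
    then have "near (S (\<not> b) (pull p)) (S (\<not> b) (pull q))"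
      using hypercube_retraction_near[OF retraction_half] len by simp
    then show ?thesis using 2 unfolding lift_def by (simp add: near_Cons)
  next
    case 3
    then show ?thesis using lift_near_leaving pq by blast
  next
    case 4
    then have "near (lift b q) (lift b p)"
      using lift_near_leaving pq len hamming_commute by metis
    then show ?thesis using near_commute length_lift pq by metis
  qed
qed

lemma hypercube_retraction_retraction: "hypercube_retraction (Suc n) H retraction"
  unfolding hypercube_retraction_def
proof (intro conjI allI impI ballI)
  fix x :: "bool list" assume "length x = Suc n"
  then show "retraction x \<in> H"
    using retraction_projection lift_mem unfolding retraction_def hypercube_retraction_def by simp
next
  fix h assume h: "h \<in> H"
  then have "tl h \<in> projection" using tl_mem_half mem_projection_iff by blast
  then show "retraction h = h"
    using retraction_projection tl_mem_half[OF h] mem_Cons_tl[OF h]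
    unfolding retraction_def lift_def hypercube_retraction_def by simp
next
  fix x y :: "bool list" assume xy: "length x = Suc n" "length y = Suc n" "hamming x y = 1"
  then obtain a x' c y' where xy': "x = a # x'" "y = c # y'" "length x' = n" "length y' = n"
    by (cases x; cases y) auto
  then have proj: "\<sigma> x' \<in> projection" "\<sigma> y' \<in> projection"
    using retraction_projection unfolding hypercube_retraction_def by auto
  have "a \<noteq> c \<and> x' = y' \<or> a = c \<and> hamming x' y' = 1"
    using hamming_Cons_eq_1 xy xy' by simp
  then consider "c = (\<not> a)" "x' = y'" | "c = a" "hamming x' y' = 1"
    by fastforce
  then show "near (retraction x) (retraction y)"
  proof cases
    case 1
    then show ?thesis using lift_near_lift_Not[OF proj(1)] xy' unfolding retraction_def by simp
  next
    case 2
    then have "near (\<sigma> x') (\<sigma> y')"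
      using retraction_projection xy' unfolding hypercube_retraction_def by blast
    then show ?thesis
      using 2 xy' lift_nonexpansive[OF proj] unfolding retraction_def near_def by auto
  qed
qed

end

theorem median_set_retraction: "median_set n H \<Longrightarrow> \<exists>\<rho>. hypercube_retraction n H \<rho>"
proof (induction n arbitrary: H)
  case 0
  then have "H = {[]}" unfolding median_set_def by auto
  then show ?case
    unfolding hypercube_retraction_def by (intro exI[of _ "\<lambda>_. []"]) simp
next
  case (Suc n)
  interpret median_set_split n H using Suc.prems by unfold_locales
  obtain \<sigma> where \<sigma>: "hypercube_retraction n projection \<sigma>"
    using Suc.IH median_set_projection by blast
  show ?case
  proof (cases "\<exists>b. half b = {}")
    case True
    then obtain b where "half b = {}" by blast
    then have empty: "half (\<not> \<not> b) = {}" by simp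
    then have "projection = half (\<not> b)" unfolding projection_def by (cases b) auto
    then show ?thesis using retraction_single_half[OF empty] \<sigma> by auto
  next
    case False
    then obtain c where c: "c \<in> half False" "c \<in> half True"
      using halves_intersect by blast
    have "\<forall>b. \<exists>\<rho>. hypercube_retraction n (half b) \<rho>"
      using Suc.IH median_set_half False by blast
    then obtain S where S: "\<And>b. hypercube_retraction n (half b) (S b)"
      by metis
    interpret median_set_split_retractions n H c S \<sigma>
      using c S \<sigma> by unfold_locales
    show ?thesis using hypercube_retraction_retraction by blast
  qed
qed

section \<open>Cops and robbers on the hypercube\<close>

definition pair_block :: "nat \<Rightarrow> nat \<Rightarrow> nat set" where
  "pair_block n i = {j. j < n \<and> j div 2 = i}"

definition outside_block :: "nat \<Rightarrow> nat \<Rightarrow> nat set" where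
  "outside_block n i = {j. j < n \<and> j div 2 \<noteq> i}"

definition stray_coords :: "nat \<Rightarrow> nat \<Rightarrow> bool list \<Rightarrow> bool list \<Rightarrow> nat set" where
  "stray_coords n i y r = disagreements (outside_block n i) r y"

definition cop_move :: "nat \<Rightarrow> nat \<Rightarrow> bool list \<Rightarrow> bool list \<Rightarrow> bool list" where
  "cop_move n i y r = (if hamming y r \<le> 1 then r else step_towards (outside_block n i) r y)"

text \<open>In a round without capture the sum of the potentials decreases: a robber step in
  coordinate a lowers the potential of cop a div 2, a robber standing still that of any cop
  with stray coordinates, and otherwise the last cop, whose block has at most one coordinate,
  captures.\<close>

definition cop_potential :: "nat \<Rightarrow> nat \<Rightarrow> bool list \<Rightarrow> bool list \<Rightarrow> nat" where
  "cop_potential n i y r =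
    2 * card (stray_coords n i y r) + (if pair_block n i \<subseteq> diff_coords y r then 0 else 1)"

lemma card_pair_block: "card (pair_block n i) \<le> 2"
proof -
  have "pair_block n i \<subseteq> {2 * i, 2 * i + 1}" unfolding pair_block_def by auto
  then have "card (pair_block n i) \<le> card {2 * i, 2 * i + 1}" by (rule card_mono[rotated]) simp
  then show ?thesis by simp
qed

lemma card_last_pair_block: "card (pair_block n (n div 2)) \<le> 1"
proof -
  have "pair_block n (n div 2) \<subseteq> {2 * (n div 2)}" unfolding pair_block_def by auto
  then show ?thesis using card_mono[of "{2 * (n div 2)}"] by fastforce
qed

lemma finite_pair_block [simp]: "finite (pair_block n i)"
  unfolding pair_block_def by simp

lemma finite_stray_coords [simp]: "finite (stray_coords n i y r)"
  unfolding stray_coords_def outside_block_def by (rule finite_disagreements) auto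

lemma stray_coords_flip_robber:
  assumes "a < n" "length y = n" "length r = n"
  shows "stray_coords n i y (flip r a) =
    (if a \<in> pair_block n i then stray_coords n i y r
     else stray_coords n i y r - {a} \<union> ({a} - stray_coords n i y r))"
  using assms unfolding stray_coords_def disagreements_def pair_block_def outside_block_def
  by (auto simp: nth_flip)

lemma cop_move_near:
  assumes "length y = n" "length r = n"
  shows "near y (cop_move n i y r)"
proof (cases "hamming y r \<le> 1")
  case True
  then have "y = r \<or> hamming y r = 1" using hamming_eq_0_iff[of y r] assms by linarith
  then show ?thesis using True unfolding cop_move_def near_def by auto
next
  case False
  have "outside_block n i \<subseteq> {..<length y}" using assms unfolding outside_block_def by auto
  then show ?thesis using False step_towards_near_self unfolding cop_move_def by simp
qed

lemma cop_potential_step_towards: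
  assumes len: "length y = n" "length r = n" and stray: "stray_coords n i y r \<noteq> {}"
  shows "cop_potential n i (step_towards (outside_block n i) r y) r + 2 = cop_potential n i y r"
proof -
  let ?D = "stray_coords n i y r"
  let ?j = "Min ?D"
  have "?j \<in> ?D" using stray by simp
  then have j: "?j < n" "?j \<notin> pair_block n i" "?j \<in> outside_block n i" "?j \<in> ?D"
    unfolding stray_coords_def disagreements_def outside_block_def pair_block_def by auto
  have step: "step_towards (outside_block n i) r y = flip y ?j"
    using stray unfolding step_towards_def stray_coords_def by simp
  have "stray_coords n i (flip y ?j) r = ?D - {?j}"
    using disagreements_flip[of ?j y "outside_block n i" r] j len
    unfolding stray_coords_def by auto
  moreover have "pair_block n i \<subseteq> diff_coords (flip y ?j) r \<longleftrightarrow> pair_block n i \<subseteq> diff_coords y r"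
    using diff_coords_flip[of ?j y r] j len by auto
  moreover have "card (?D - {?j}) + 1 = card ?D"
    using \<open>?j \<in> ?D\<close> card_gt_0_iff[of ?D] by auto
  ultimately show ?thesis unfolding cop_potential_def step by simp
qed

lemma diff_coords_subset_pair_block:
  "length y = n \<Longrightarrow> stray_coords n i y r = {} \<Longrightarrow> diff_coords y r \<subseteq> pair_block n i"
  unfolding diff_coords_def pair_block_def stray_coords_def outside_block_def disagreements_def
  by auto

lemma pair_block_subset_diff_coords:
  assumes "length y = n" "stray_coords n i y r = {}" "2 \<le> hamming y r"
  shows "pair_block n i \<subseteq> diff_coords y r"
proof -
  have sub: "diff_coords y r \<subseteq> pair_block n i"
    using assms diff_coords_subset_pair_block by blast
  have "card (pair_block n i) \<le> card (diff_coords y r)"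
    using assms(3) card_pair_block[of n i] unfolding hamming_def by linarith
  then have "card (diff_coords y r) = card (pair_block n i)"
    using card_mono[OF finite_pair_block sub] by simp
  then show ?thesis using card_subset_eq[OF finite_pair_block sub] by simp
qed

lemma cop_move_no_capture:
  assumes "cop_move n i y r \<noteq> r"
  shows "2 \<le> hamming y r" "cop_move n i y r = step_towards (outside_block n i) r y"
  using assms unfolding cop_move_def by (auto split: if_splits)

lemma cop_potential_cop_move:
  assumes len: "length y = n" "length r = n" and no_capture: "cop_move n i y r \<noteq> r"
  shows "stray_coords n i y r \<noteq> {} \<Longrightarrow>
      cop_potential n i (cop_move n i y r) r + 2 = cop_potential n i y r"
    and "stray_coords n i y r = {} \<Longrightarrow> cop_potential n i (cop_move n i y r) r = 0"
proof -
  note move = cop_move_no_capture[OF no_capture]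
  show "stray_coords n i y r \<noteq> {} \<Longrightarrow>
      cop_potential n i (cop_move n i y r) r + 2 = cop_potential n i y r"
    using cop_potential_step_towards len move(2) by simp
  assume stray: "stray_coords n i y r = {}"
  then have "cop_move n i y r = y"
    using move(2) unfolding step_towards_def stray_coords_def by simp
  then show "cop_potential n i (cop_move n i y r) r = 0"
    using pair_block_subset_diff_coords[OF len(1) stray move(1)] stray
    unfolding cop_potential_def by simp
qed

lemma cop_potential_flip_robber:
  assumes a: "a < n" and len: "length y = n" "length r = n"
  shows "cop_potential n i y (flip r a)
    \<le> cop_potential n i y r + (if a \<in> pair_block n i then 1 else 2)"
proof (cases "a \<in> pair_block n i")
  case True
  then show ?thesis
    using stray_coords_flip_robber[OF assms] unfolding cop_potential_def by simp
next
  case False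
  have "diff_coords y (flip r a) = diff_coords y r - {a} \<union> ({a} - diff_coords y r)"
    using diff_coords_flip_right a len by simp
  then have "pair_block n i \<subseteq> diff_coords y (flip r a) \<longleftrightarrow> pair_block n i \<subseteq> diff_coords y r"
    using False by auto
  moreover have "card (stray_coords n i y (flip r a)) \<le> card (stray_coords n i y r) + 1"
  proof -
    have "stray_coords n i y (flip r a) \<subseteq> insert a (stray_coords n i y r)"
      using stray_coords_flip_robber[OF assms] by auto
    then have "card (stray_coords n i y (flip r a)) \<le> card (insert a (stray_coords n i y r))"
      by (rule card_mono[rotated]) simp
    then show ?thesis using card_insert_le_m1[of _ "stray_coords n i y r"] by (simp add: card_insert_if split: if_splits)
  qed
  ultimately show ?thesis using False unfolding cop_potential_def by simp
qed

lemma cop_potential_round_stay: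
  assumes "length y = n" "length r = n" "cop_move n i y r \<noteq> r"
  shows "cop_potential n i (cop_move n i y r) r \<le> cop_potential n i y r"
    and "stray_coords n i y r \<noteq> {} \<Longrightarrow> cop_potential n i (cop_move n i y r) r < cop_potential n i y r"
  using cop_potential_cop_move[OF assms] by (cases "stray_coords n i y r = {}"; force)+

lemma cop_potential_round_flip:
  assumes a: "a < n" and len: "length y = n" "length r = n"
    and no_capture: "cop_move n i y (flip r a) \<noteq> flip r a"
  shows "cop_potential n i (cop_move n i y (flip r a)) (flip r a) \<le> cop_potential n i y r"
    and "a \<in> pair_block n i \<Longrightarrow>
      cop_potential n i (cop_move n i y (flip r a)) (flip r a) < cop_potential n i y r"
proof -
  let ?r = "flip r a"
  have len': "length ?r = n" using len by simp
  note after = cop_potential_cop_move[OF len(1) len' no_capture]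
  note robber = cop_potential_flip_robber[OF assms(1-3), of i]
  show "cop_potential n i (cop_move n i y ?r) ?r \<le> cop_potential n i y r"
    using after robber by (cases "stray_coords n i y ?r = {}") (auto split: if_splits)
  assume block: "a \<in> pair_block n i"
  show "cop_potential n i (cop_move n i y ?r) ?r < cop_potential n i y r"
  proof (cases "stray_coords n i y ?r = {}")
    case True
    then have "pair_block n i \<subseteq> diff_coords y ?r"
      using pair_block_subset_diff_coords len cop_move_no_capture[OF no_capture] by simp
    then have "a \<notin> diff_coords y r"
      using block diff_coords_flip_right[of a r y] a len by auto
    then have "cop_potential n i y r \<noteq> 0"
      using block unfolding cop_potential_def by auto
    then show ?thesis using after(2)[OF True] by simp
  next
    case False
    then show ?thesis using after(1) robber block by simp
  qed
qed

definition cops_move :: "nat \<Rightarrow> bool list list \<Rightarrow> bool list \<Rightarrow> bool list list" where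
  "cops_move n C r = map (\<lambda>i. cop_move n i (C ! i) r) [0..<length C]"

definition cops_potential :: "nat \<Rightarrow> bool list list \<Rightarrow> bool list \<Rightarrow> nat" where
  "cops_potential n C r = (\<Sum>i<length C. cop_potential n i (C ! i) r)"

lemma length_cops_move [simp]: "length (cops_move n C r) = length C"
  unfolding cops_move_def by simp

lemma nth_cops_move [simp]: "i < length C \<Longrightarrow> cops_move n C r ! i = cop_move n i (C ! i) r"
  unfolding cops_move_def by simp

lemma length_cop_move: "length y = n \<Longrightarrow> length r = n \<Longrightarrow> length (cop_move n i y r) = n"
  unfolding cop_move_def by simp

lemma cop_step_cops_move:
  assumes "\<forall>y\<in>set C. length y = n" "length r = n"
  shows "cop_step (Q_adj n) C (cops_move n C r)"
  unfolding cop_step_def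
proof (rule list_all2_all_nthI)
  fix i assume "i < length C"
  then have "length (C ! i) = n" using assms(1) by simp
  then show "cops_move n C r ! i = C ! i \<or> Q_adj n (C ! i) (cops_move n C r ! i)"
    using cop_move_near[OF _ assms(2), of "C ! i" i] length_cop_move[OF _ assms(2)] \<open>i < length C\<close>
    unfolding near_def Q_adj_iff_hamming by auto
qed simp

lemma cops_potential_decreases:
  assumes C: "length C = n div 2 + 1" "\<forall>y\<in>set C. length y = n"
    and r: "length r = n" "r' = r \<or> Q_adj n r r'"
    and no_capture: "\<forall>i<length C. cop_move n i (C ! i) r' \<noteq> r'"
  shows "cops_potential n (cops_move n C r') r' < cops_potential n C r"
proof -
  let ?new = "\<lambda>i. cop_potential n i (cop_move n i (C ! i) r') r'"
  let ?old = "\<lambda>i. cop_potential n i (C ! i) r"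
  have len: "\<And>i. i < length C \<Longrightarrow> length (C ! i) = n" using C(2) by simp
  have "r' = r \<or> (\<exists>a<n. r' = flip r a)"
    using r hamming_eq_1_iff_flip[of r r'] unfolding Q_adj_iff_hamming by auto
  then consider "r' = r" | a where "a < n" "r' = flip r a" by blast
  then have "(\<forall>i\<in>{..<length C}. ?new i \<le> ?old i) \<and> (\<exists>i\<in>{..<length C}. ?new i < ?old i)"
  proof cases
    case 1
    have "\<exists>i\<in>{..<length C}. ?new i < ?old i"
    proof (cases "\<exists>i<length C. stray_coords n i (C ! i) r \<noteq> {}")
      case True
      then obtain i where i: "i < length C" "stray_coords n i (C ! i) r \<noteq> {}" by blast
      then have "?new i < ?old i"
        using cop_potential_round_stay(2)[OF len[OF i(1)] r(1)] no_capture 1 by simp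
      then show ?thesis using i(1) by blast
    next
      case False
      let ?i = "n div 2"
      have i: "?i < length C" using C(1) by simp
      moreover have "stray_coords n ?i (C ! ?i) r = {}" using False i by blast
      ultimately have "diff_coords (C ! ?i) r \<subseteq> pair_block n ?i"
        using diff_coords_subset_pair_block len by simp
      then have "card (diff_coords (C ! ?i) r) \<le> card (pair_block n ?i)"
        by (rule card_mono[OF finite_pair_block])
      then have "hamming (C ! ?i) r \<le> 1"
        using card_last_pair_block[of n] unfolding hamming_def by linarith
      then have "cop_move n ?i (C ! ?i) r = r" unfolding cop_move_def by simp
      then show ?thesis using no_capture i 1 by simp
    qed
    moreover have "?new i \<le> ?old i" if "i < length C" for i
      using cop_potential_round_stay(1)[OF len[OF that] r(1)] no_capture that 1 by simp
    ultimately show ?thesis by blast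
  next
    case (2 a)
    have i: "a div 2 < length C" using 2 C(1) by (simp add: less_Suc_eq_le div_le_mono)
    have "a \<in> pair_block n (a div 2)" using 2 unfolding pair_block_def by simp
    then have "?new (a div 2) < ?old (a div 2)"
      using cop_potential_round_flip(2)[OF 2(1) len[OF i] r(1)] no_capture i 2(2) by simp
    then have "\<exists>i\<in>{..<length C}. ?new i < ?old i" using i by blast
    moreover have "?new i \<le> ?old i" if "i < length C" for i
      using cop_potential_round_flip(1)[OF 2(1) len[OF that] r(1)] no_capture that 2(2) by simp
    ultimately show ?thesis by blast
  qed
  then have "(\<Sum>i<length C. ?new i) < (\<Sum>i<length C. ?old i)"
    using sum_strict_mono_ex1[OF finite_lessThan, of "length C" ?new ?old] by blast
  moreover have "cops_potential n (cops_move n C r') r' = (\<Sum>i<length C. ?new i)"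
    unfolding cops_potential_def by (intro sum.cong) auto
  ultimately show ?thesis unfolding cops_potential_def by simp
qed

lemma hypercube_cops_win_from:
  assumes "length C = n div 2 + 1" "\<forall>y\<in>set C. length y = n"
    and "length r = n" "r' = r \<or> Q_adj n r r'"
  shows "cops_win_from V (Q_adj n) C r'"
  using assms
proof (induction "cops_potential n C r" arbitrary: C r r' rule: less_induct)
  case less
  let ?C' = "cops_move n C r'"
  have r': "length r' = n" using less.prems(3,4) Q_adj_iff_hamming by auto
  have "length (?C' ! i) = n" if "i < length C" for i
    using that less.prems(2) length_cop_move[OF _ r'] by simp
  then have C': "length ?C' = n div 2 + 1" "\<forall>y\<in>set ?C'. length y = n"
    using less.prems(1) by (auto simp: in_set_conv_nth)
  show ?case
  proof (rule cops_win_from.intros[OF cop_step_cops_move[OF less.prems(2) r']])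
    show "r' \<in> set ?C' \<or> (\<forall>r''. r'' = r' \<or> Q_adj n r' r'' \<longrightarrow> r'' \<in> set ?C' \<or> cops_win_from V (Q_adj n) ?C' r'')"
    proof (cases "\<exists>i<length C. cop_move n i (C ! i) r' = r'")
      case True
      then have "r' \<in> set ?C'" by (auto simp: in_set_conv_nth)
      then show ?thesis by simp
    next
      case False
      then have "cops_potential n ?C' r' < cops_potential n C r"
        using cops_potential_decreases less.prems by blast
      then show ?thesis using less.hyps C' r' by blast
    qed
  qed
qed

lemma hypercube_cops_win: "cops_win (Q_vert n) (Q_adj n) (n div 2 + 1)"
  unfolding cops_win_def
proof (intro exI conjI ballI disjI2)
  let ?C = "replicate (n div 2 + 1) (replicate n False)"
  show "length ?C = n div 2 + 1" "set ?C \<subseteq> Q_vert n"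
    unfolding Q_vert_def by auto
  fix r assume "r \<in> Q_vert n"
  then show "cops_win_from (Q_vert n) (Q_adj n) ?C r"
    using hypercube_cops_win_from[of ?C n r r] unfolding Q_vert_def by simp
qed

section \<open>Cops and robbers on retracts\<close>

lemma cops_win_from_retract:
  assumes win: "cops_win_from V' E' C r'"
    and graph: "graph V E"
    and f_adj: "\<And>x y. x \<in> V \<Longrightarrow> y \<in> V \<Longrightarrow> E x y \<Longrightarrow> E' (f x) (f y)"
    and g_f: "\<And>v. v \<in> V \<Longrightarrow> g (f v) = v"
    and g_adj: "\<And>x y. E' x y \<Longrightarrow> g y = g x \<or> E (g x) (g y)"
  shows "r' = f r \<Longrightarrow> r \<in> V \<Longrightarrow> cops_win_from V E (map g C) r"
  using win
proof (induction arbitrary: r rule: cops_win_from.induct)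
  case (1 C C' r')
  have "list_all2 (\<lambda>x y. g y = g x \<or> E (g x) (g y)) C C'"
    using 1(1) unfolding cop_step_def by (rule list_all2_mono) (use g_adj in blast)
  then have step: "cop_step E (map g C) (map g C')"
    unfolding cop_step_def by (simp add: list_all2_map1 list_all2_map2)
  show ?case
  proof (rule cops_win_from.intros[OF step])
    show "r \<in> set (map g C') \<or> (\<forall>r''. r'' = r \<or> E r r'' \<longrightarrow> r'' \<in> set (map g C') \<or> cops_win_from V E (map g C') r'')"
    proof (cases "r' \<in> set C'")
      case True
      then show ?thesis using 1(3,4) g_f by force
    next
      case False
      have "r'' \<in> set (map g C') \<or> cops_win_from V E (map g C') r''"
        if "r'' = r \<or> E r r''" for r''
      proof -
        have "r'' \<in> V" using that 1(4) graph unfolding graph_def by blast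
        moreover have "f r'' = r' \<or> E' r' (f r'')" using that 1(3,4) f_adj \<open>r'' \<in> V\<close> by blast
        ultimately show ?thesis using 1(2) False g_f by force
      qed
      then show ?thesis by blast
    qed
  qed
qed

lemma cops_win_retract:
  assumes "cops_win V' E' k" "graph V E"
    and "f ` V \<subseteq> V'" "g ` V' \<subseteq> V"
    and "\<And>x y. x \<in> V \<Longrightarrow> y \<in> V \<Longrightarrow> E x y \<Longrightarrow> E' (f x) (f y)"
    and "\<And>v. v \<in> V \<Longrightarrow> g (f v) = v"
    and "\<And>x y. E' x y \<Longrightarrow> g y = g x \<or> E (g x) (g y)"
  shows "cops_win V E k"
proof -
  obtain C where C: "length C = k" "set C \<subseteq> V'" "\<forall>r\<in>V'. r \<in> set C \<or> cops_win_from V' E' C r"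
    using assms(1) unfolding cops_win_def by blast
  have "r \<in> set (map g C) \<or> cops_win_from V E (map g C) r" if r: "r \<in> V" for r
  proof -
    have "f r \<in> set C \<or> cops_win_from V' E' C (f r)" using C(3) assms(3) r by blast
    then show ?thesis
    proof
      assume "f r \<in> set C"
      then have "g (f r) \<in> set (map g C)" by simp
      then show ?thesis using assms(6) r by simp
    next
      assume "cops_win_from V' E' C (f r)"
      then show ?thesis
        using cops_win_from_retract[where E' = E' and f = f and g = g, OF _ assms(2,5-7) refl r]
        by blast
    qed
  qed
  moreover have "set (map g C) \<subseteq> V" using C(2) assms(4) by auto
  ultimately show ?thesis using C(1) unfolding cops_win_def by (intro exI[of _ "map g C"]) auto
qed

context median_hypercube_embedding
begin

lemma cops_win_of_hypercube:
  assumes "V \<noteq> {}" "cops_win (Q_vert n) (Q_adj n) k"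
  shows "cops_win V E k"
proof -
  obtain \<rho> where \<rho>: "hypercube_retraction n (f ` V) \<rho>"
    using median_set_retraction median_set_image assms(1) by blast
  let ?g = "\<lambda>x. inv_into V f (\<rho> x)"
  have \<rho>_into: "\<rho> x \<in> f ` V" if "x \<in> Q_vert n" for x
    using \<rho> that unfolding hypercube_retraction_def Q_vert_def by simp
  have g_f: "?g (f v) = v" if "v \<in> V" for v
    using \<rho> that inj unfolding hypercube_retraction_def by simp
  have g_adj: "?g y = ?g x \<or> E (?g x) (?g y)" if "Q_adj n x y" for x y
  proof -
    have "x \<in> Q_vert n" "y \<in> Q_vert n" using that unfolding Q_adj_def Q_vert_def by auto
    then have "\<rho> x \<in> f ` V" "\<rho> y \<in> f ` V" using \<rho>_into by auto
    moreover have "near (\<rho> x) (\<rho> y)"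
      using \<rho> that unfolding hypercube_retraction_def Q_adj_iff_hamming by blast
    ultimately show ?thesis
      using adj[of "?g x" "?g y"] length_image unfolding near_def Q_adj_iff_hamming
      by (auto simp: f_inv_into_f inv_into_into)
  qed
  have "?g ` Q_vert n \<subseteq> V" using \<rho>_into by (auto intro: inv_into_into)
  moreover have "Q_adj n (f x) (f y)" if "x \<in> V" "y \<in> V" "E x y" for x y
    using adj that by blast
  ultimately show ?thesis
    using cops_win_retract[OF assms(2) graph into] g_f g_adj by blast
qed

end

theorem corollary4p1:
  fixes V :: "'a set" and E :: "'a \<Rightarrow> 'a \<Rightarrow> bool" and n :: nat
  assumes "median_graph V E"
    and "isometric_embeds_in_Q V E n"
  shows "real (cop_number V E) \<le> real_of_int \<lceil>real (n + 1) / 2\<rceil>"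
proof -
  obtain f where "median_hypercube_embedding V E n f"
    using assms unfolding isometric_embeds_in_Q_def median_hypercube_embedding_def by blast
  then have "cops_win V E (n div 2 + 1)" if "V \<noteq> {}"
    using median_hypercube_embedding.cops_win_of_hypercube hypercube_cops_win that by blast
  moreover have "cops_win V E 0" if "V = {}"
    using that unfolding cops_win_def by simp
  ultimately have "cop_number V E \<le> n div 2 + 1"
    unfolding cop_number_def by (metis Least_le le0 le_trans)
  moreover have "real (2 * (n div 2)) \<le> real n" by simp
  then have "real (n div 2) < real (n + 1) / 2" by simp
  then have "int (n div 2 + 1) \<le> \<lceil>real (n + 1) / 2\<rceil>" by (simp add: le_ceiling_iff)
  then have "real (n div 2 + 1) \<le> real_of_int \<lceil>real (n + 1) / 2\<rceil>" by linarith
  ultimately show ?thesis by linarith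
qed

end
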